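(* Consider a market in which every hospital's utility is proportional to total wage, i.e. for each $h\in H$ there is $\gamma_h>0$ with $f_h(Y)=\gamma_h w_h(Y)$ for all $Y\subseteq X_h$. For each $h$, let $\mathrm{Ch}_h$ be the choice function that, given $X'\subseteq X_h$ (with $\mathrm{Ch}_h(\emptyset)=\emptyset$), sorts $X'$ in non-decreasing order of wage (ties broken by a fixed order) as $x^{(1)},\dots,x^{(|X'|)}$, starts with $Y=\emptyset$, for $i=1,\dots,|X'|-1$ adds $x^{(i)}$ to $Y$ if $w_h(Y\cup\{x^{(i)}\})<B_h$, then adds $x^{(|X'|)}$ and returns $Y$. Then the generalized deferred acceptance mechanism with these choice functions is strategy-proof for doctors and produces a $B'_H$-stable matching for some $B'_H$ with $B_h\le B'_h<B_h+\overline{w}_h$ for every $h\in H$.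
   Context: A market consists of a finite set of doctors $D$, a finite set of hospitals $H$, a finite set of contracts $X\subseteq D\times H\times\mathbb{R}_{>0}$ (contract $x=(d,h,w)$ has doctor $x_D=d$, hospital $x_H=h$, wage $x_W=w$), strict preferences $\succ_d$ of each doctor $d$ over $X_d\cup\{\emptyset\}$, utilities $f_h$ of each hospital on subsets of $X_h$, and budgets $B_h>0$ with $0<x_W\le B_h$ for all $x\in X_h$. For $Y\subseteq X$: $Y_d=\{x\in Y:x_D=d\}$, $Y_h=\{x\in Y:x_H=h\}$, $w_h(Y)=\sum_{x\in Y_h}x_W$; $\overline{w}_h=\max_{x\in X_h}x_W$. A matching is $Y\subseteq X$ with $|Y_d|\le1$ for all $d$. Given $B'_H=(B'_h)_h$, a matching $Y$ is $B'_H$-feasible if $w_h(Y)\le B'_h$ for all $h$; a matching $Z\subseteq X_h$ blocks $Y$ if every doctor $x_D$ with $x\in Z\setminus Y$ strictly prefers $x$ to her contract in $Y$ (or to $\emptyset$), $f_h(Z)>f_h(Y_h)$ and $w_h(Z)\le B'_h$; $Y$ is $B'_H$-stable if it is $B'_H$-feasible and not blocked by any $h$ and $Z\subseteq X_h$. Generalized deferred acceptance with hospital choice functions $\mathrm{Ch}_h$: let $\mathrm{Ch}_H(Y)=\bigcup_h\mathrm{Ch}_h(Y_h)$; $\mathrm{Ch}_d(Y)=\{x\}$ for the $\succ_d$-best $x\in Y_d$ if $x\succ_d\emptyset$, else $\emptyset$; $\mathrm{Ch}_D(Y)=\bigcup_d\mathrm{Ch}_d(Y_d)$. Set $R^{(0)}=\emptyset$;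 for $i=1,2,\dots$: $Y^{(i)}=\mathrm{Ch}_D(X\setminus R^{(i-1)})$, $Z^{(i)}=\mathrm{Ch}_H(Y^{(i)})$, $R^{(i)}=R^{(i-1)}\cup(Y^{(i)}\setminus Z^{(i)})$; if $Y^{(i)}=Z^{(i)}$, output $Y^{(i)}$. This is a mechanism mapping reported doctor preference profiles to matchings; it is strategy-proof for doctors if for every doctor $d$, every profile $\succ_D$ and every alternative report $\succ'_d$, the outcome of $d$ under $\succ_D$ is weakly $\succ_d$-preferred to her outcome under $(\succ'_d,\succ_{-d})$. *)

theory Defs
  imports Complex_Main
begin

type_synonym ('d, 'h) contract = "'d \<times> 'h \<times> real"

definition cD :: "('d, 'h) contract \<Rightarrow> 'd" where "cD x = fst x"
definition cH :: "('d, 'h) contract \<Rightarrow> 'h" where "cH x = fst (snd x)"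
definition cW :: "('d, 'h) contract \<Rightarrow> real" where "cW x = snd (snd x)"

definition doc_part :: "('d, 'h) contract set \<Rightarrow> 'd \<Rightarrow> ('d, 'h) contract set" where
  "doc_part Y d = {x \<in> Y. cD x = d}"
definition hosp_part :: "('d, 'h) contract set \<Rightarrow> 'h \<Rightarrow> ('d, 'h) contract set" where
  "hosp_part Y h = {x \<in> Y. cH x = h}"

text \<open>total wage of a set of contracts; w_h(Y) = wsum (hosp_part Y h)\<close>
definition wsum :: "('d, 'h) contract set \<Rightarrow> real" where
  "wsum Y = (\<Sum>x\<in>Y. cW x)"

definition wbar :: "('d, 'h) contract set \<Rightarrow> 'h \<Rightarrow> real" where
  "wbar X h = Max (cW ` hosp_part X h)"

text \<open>Strict preferences: (a, b) \<in> r means a is strictly preferred to b;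
  None stands for being unmatched (\<emptyset>).\<close>
definition pref_on :: "'a set \<Rightarrow> 'a rel \<Rightarrow> bool" where
  "pref_on A r \<longleftrightarrow> strict_linear_order_on A r \<and> r \<subseteq> A \<times> A"

definition acc_set :: "('d, 'h) contract set \<Rightarrow> 'd \<Rightarrow> ('d, 'h) contract option set" where
  "acc_set X d = insert None (Some ` doc_part X d)"

definition valid_profile :: "'d set \<Rightarrow> ('d, 'h) contract set \<Rightarrow>
    ('d \<Rightarrow> ('d, 'h) contract option rel) \<Rightarrow> bool" where
  "valid_profile D X P \<longleftrightarrow> (\<forall>d\<in>D. pref_on (acc_set X d) (P d))"

definition is_matching :: "('d, 'h) contract set \<Rightarrow> bool" where
  "is_matching Y \<longleftrightarrow> (\<forall>d. finite (doc_part Y d) \<and> card (doc_part Y d) \<le> 1)"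

definition outcome :: "('d, 'h) contract set \<Rightarrow> 'd \<Rightarrow> ('d, 'h) contract option" where
  "outcome Y d = (if doc_part Y d \<noteq> {} then Some (THE x. x \<in> doc_part Y d) else None)"

definition weakly_pref :: "'a rel \<Rightarrow> 'a \<Rightarrow> 'a \<Rightarrow> bool" where
  "weakly_pref r a b \<longleftrightarrow> a = b \<or> (a, b) \<in> r"

definition feasible :: "'h set \<Rightarrow> ('h \<Rightarrow> real) \<Rightarrow> ('d, 'h) contract set \<Rightarrow> bool" where
  "feasible H B' Y \<longleftrightarrow> (\<forall>h\<in>H. wsum (hosp_part Y h) \<le> B' h)"

definition blocks :: "('d, 'h) contract set \<Rightarrow> ('d \<Rightarrow> ('d, 'h) contract option rel) \<Rightarrow>
    ('h \<Rightarrow> ('d, 'h) contract set \<Rightarrow> real) \<Rightarrow> ('h \<Rightarrow> real) \<Rightarrow>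
    'h \<Rightarrow> ('d, 'h) contract set \<Rightarrow> ('d, 'h) contract set \<Rightarrow> bool" where
  "blocks X P f B' h Z Y \<longleftrightarrow>
     Z \<subseteq> hosp_part X h \<and> is_matching Z \<and>
     (\<forall>x\<in>Z - Y. (Some x, outcome Y (cD x)) \<in> P (cD x)) \<and>
     f h Z > f h (hosp_part Y h) \<and> wsum Z \<le> B' h"

definition stable :: "'h set \<Rightarrow> ('d, 'h) contract set \<Rightarrow> ('d \<Rightarrow> ('d, 'h) contract option rel) \<Rightarrow>
    ('h \<Rightarrow> ('d, 'h) contract set \<Rightarrow> real) \<Rightarrow> ('h \<Rightarrow> real) \<Rightarrow> ('d, 'h) contract set \<Rightarrow> bool" where
  "stable H X P f B' Y \<longleftrightarrow> Y \<subseteq> X \<and> is_matching Y \<and> feasible H B' Y \<and>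
     \<not> (\<exists>h\<in>H. \<exists>Z. blocks X P f B' h Z Y)"

definition chD :: "('d \<Rightarrow> ('d, 'h) contract option rel) \<Rightarrow> ('d, 'h) contract set \<Rightarrow> ('d, 'h) contract set" where
  "chD P Y = {x \<in> Y. (Some x, None) \<in> P (cD x) \<and>
      (\<forall>y\<in>Y. cD y = cD x \<and> y \<noteq> x \<longrightarrow> (Some x, Some y) \<in> P (cD x))}"

definition hlt :: "('h \<Rightarrow> ('d, 'h) contract rel) \<Rightarrow> 'h \<Rightarrow> ('d, 'h) contract \<Rightarrow> ('d, 'h) contract \<Rightarrow> bool" where
  "hlt tb h x y \<longleftrightarrow> cW x < cW y \<or> (cW x = cW y \<and> (x, y) \<in> tb h)"

definition sorted_list :: "('h \<Rightarrow> ('d, 'h) contract rel) \<Rightarrow> 'h \<Rightarrow> ('d, 'h) contract set \<Rightarrow> ('d, 'h) contract list" where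
  "sorted_list tb h X' = (SOME xs. set xs = X' \<and> distinct xs \<and> sorted_wrt (hlt tb h) xs)"

fun greedy :: "real \<Rightarrow> ('d, 'h) contract set \<Rightarrow> ('d, 'h) contract list \<Rightarrow> ('d, 'h) contract set" where
  "greedy b Y [] = Y"
| "greedy b Y [x] = insert x Y"
| "greedy b Y (x # y # xs) = greedy b (if wsum (insert x Y) < b then insert x Y else Y) (y # xs)"

definition chh :: "('h \<Rightarrow> real) \<Rightarrow> ('h \<Rightarrow> ('d, 'h) contract rel) \<Rightarrow> 'h \<Rightarrow> ('d, 'h) contract set \<Rightarrow> ('d, 'h) contract set" where
  "chh B tb h X' = greedy (B h) {} (sorted_list tb h X')"

definition chH :: "'h set \<Rightarrow> ('h \<Rightarrow> real) \<Rightarrow> ('h \<Rightarrow> ('d, 'h) contract rel) \<Rightarrow> ('d, 'h) contract set \<Rightarrow> ('d, 'h) contract set" where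
  "chH H B tb Y = (\<Union>h\<in>H. chh B tb h (hosp_part Y h))"

text \<open>rej i = R^(i); the i-th round (1-based) proposes Y^(i) = chD P (X - rej (i-1)).\<close>
fun rej :: "'h set \<Rightarrow> ('d, 'h) contract set \<Rightarrow> ('h \<Rightarrow> real) \<Rightarrow> ('h \<Rightarrow> ('d, 'h) contract rel) \<Rightarrow>
    ('d \<Rightarrow> ('d, 'h) contract option rel) \<Rightarrow> nat \<Rightarrow> ('d, 'h) contract set" where
  "rej H X B tb P 0 = {}"
| "rej H X B tb P (Suc i) =
     rej H X B tb P i \<union> (chD P (X - rej H X B tb P i) - chH H B tb (chD P (X - rej H X B tb P i)))"

definition gda :: "'h set \<Rightarrow> ('d, 'h) contract set \<Rightarrow> ('h \<Rightarrow> real) \<Rightarrow> ('h \<Rightarrow> ('d, 'h) contract rel) \<Rightarrow>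
    ('d \<Rightarrow> ('d, 'h) contract option rel) \<Rightarrow> ('d, 'h) contract set" where
  "gda H X B tb P =
    (let k = (LEAST k. chD P (X - rej H X B tb P k) = chH H B tb (chD P (X - rej H X B tb P k)))
     in chD P (X - rej H X B tb P k))"

definition strategy_proof :: "'d set \<Rightarrow> ('d, 'h) contract set \<Rightarrow>
    (('d \<Rightarrow> ('d, 'h) contract option rel) \<Rightarrow> ('d, 'h) contract set) \<Rightarrow> bool" where
  "strategy_proof D X M \<longleftrightarrow>
    (\<forall>P d P'. valid_profile D X P \<and> d \<in> D \<and> pref_on (acc_set X d) P' \<longrightarrow>
       weakly_pref (P d) (outcome (M P) d) (outcome (M (P(d := P'))) d))"

end

theory Submission
  imports Defs
begin

(* A contract that is chosen
   from a set is chosen from every subset containing it (substitutes), and adding a contract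
   can make at most one previously affordable contract unaffordable, in which case the new
   contract itself becomes affordable (law of aggregate demand). For such choice functions
   deferred acceptance is strategy-proof for doctors (Hatfield and Milgrom), via truncating the
   true list just below the contract obtained by misreporting. Every chosen set exceeds the
   budget by less than one wage, and a hospital that rejected something has spent at least its
   budget; with utility proportional to wage, a blocking set would have to cost more than the
   current one, forcing it to include a rejected contract, so raising each budget to what the
   hospital actually spends gives stability. *)

lemma wsum_insert: "finite Y \<Longrightarrow> x \<notin> Y \<Longrightarrow> wsum (insert x Y) = cW x + wsum Y"
  by (simp add: wsum_def)

lemma wsum_mono:
  "A \<subseteq> B \<Longrightarrow> finite B \<Longrightarrow> (\<And>z. z \<in> B \<Longrightarrow> 0 < cW z) \<Longrightarrow> wsum A \<le> wsum B"
  unfolding wsum_def by (rule sum_mono2) (auto intro: less_imp_le)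

lemma hosp_part_subset: "hosp_part S h \<subseteq> S"
  by (auto simp: hosp_part_def)

lemma hosp_part_mono: "S \<subseteq> T \<Longrightarrow> hosp_part S h \<subseteq> hosp_part T h"
  by (auto simp: hosp_part_def)

lemma greedy_exhausted:
  assumes "finite Y" "set xs \<inter> Y = {}" "xs \<noteq> []"
    and "b \<le> wsum Y + cW u" "\<forall>x\<in>set xs. cW u \<le> cW x"
  shows "greedy b Y xs = insert (last xs) Y"
  using assms
proof (induction b Y xs rule: greedy.induct)
  case (3 b Y x y xs)
  then have "\<not> wsum (insert x Y) < b" by (simp add: wsum_insert)
  with 3 show ?case by simp
qed simp_all

lemma sorted_wrt_prefix_closed:
  assumes "sorted_wrt lt (ps @ qs)" "\<And>a c. lt a c \<Longrightarrow> \<not> lt c a"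
    and "p \<in> set ps" "z \<in> set (ps @ qs)" "lt z p \<or> z = p"
  shows "z \<in> set ps"
  using assms by (auto simp: sorted_wrt_append)

text \<open>Along a list sorted by wage, greedy accepts every contract until the first one that
  would exhaust the budget; from then on only the last contract is accepted.\<close>

lemma greedy_sorted:
  assumes "ps @ qs = xs" "qs \<noteq> []" "sorted_wrt lt xs" "distinct xs"
    and "\<And>a c. lt a c \<Longrightarrow> \<not> lt c a" "\<And>a c. lt a c \<Longrightarrow> cW a \<le> cW c"
    and "\<And>z. z \<in> set xs \<Longrightarrow> 0 < cW z" "wsum (set ps) < b"
  defines "L z \<equiv> {y \<in> set xs. lt y z \<or> y = z}"
  shows "greedy b (set ps) qs = {z \<in> set (butlast xs). wsum (L z) < b} \<union> {last xs}
    \<and> (greedy b (set ps) qs \<noteq> set xs \<longrightarrow> b \<le> wsum (greedy b (set ps) qs))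
    \<and> wsum (greedy b (set ps) qs) < b + cW (last xs)"
  using assms(1,2,8)
proof (induction qs arbitrary: ps)
  case (Cons x qs)
  have srt: "sorted_wrt lt (ps @ x # qs)" and dst: "distinct (ps @ x # qs)"
    using assms(3,4) Cons.prems(1) by simp_all
  have x_ps: "x \<notin> set ps" using dst by simp
  have L_ps: "L p \<subseteq> set ps" if "p \<in> set ps" for p
    unfolding L_def using sorted_wrt_prefix_closed[OF srt assms(5) that] Cons.prems(1) by blast
  have ps_L: "insert x (set ps) \<subseteq> L z" if "z \<in> set (x # qs)" for z
    using that srt Cons.prems(1) by (auto simp: L_def sorted_wrt_append)
  have fin_L: "finite (L z)" for z by (simp add: L_def)
  have pos_L: "0 < cW y" if "y \<in> L z" for y z using assms(7) that by (simp add: L_def)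
  have w_ps: "wsum (L p) < b" if "p \<in> set ps" for p
    using wsum_mono[OF L_ps[OF that] _ assms(7)] Cons.prems(1,3) by fastforce
  have w_x: "wsum (insert x (set ps)) = cW x + wsum (set ps)" by (rule wsum_insert[OF _ x_ps]) simp
  show ?case
  proof (cases "qs = []")
    case True
    then have "butlast xs = ps" "last xs = x" using Cons.prems(1) by auto
    with True Cons.prems w_ps w_x show ?thesis by auto
  next
    case False
    show ?thesis
    proof (cases "wsum (insert x (set ps)) < b")
      case True
      have step: "greedy b (set ps) (x # qs) = greedy b (set (ps @ [x])) qs"
        using False True by (cases qs) simp_all
      show ?thesis unfolding step
        by (rule Cons.IH) (use Cons.prems(1) True False in simp_all)
    next
      case over: False
      have last: "last xs = last qs" "last qs \<in> set qs" using Cons.prems(1) False by auto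
      have "greedy b (set ps) (x # qs) = insert (last (x # qs)) (set ps)"
      proof (rule greedy_exhausted[where u = x])
        show "b \<le> wsum (set ps) + cW x" using over w_x by simp
        show "\<forall>q\<in>set (x # qs). cW x \<le> cW q" using srt assms(6) by (simp add: sorted_wrt_append)
      qed (use dst in auto)
      then have G: "greedy b (set ps) (x # qs) = insert (last xs) (set ps)" using last False by simp
      have "cW x \<le> cW (last xs)"
        using last srt assms(6) by (auto simp: sorted_wrt_append)
      moreover have "wsum (insert (last xs) (set ps)) = cW (last xs) + wsum (set ps)"
        using last dst by (intro wsum_insert) auto
      moreover have "{z \<in> set (butlast xs). wsum (L z) < b} = set ps"
      proof -
        have "set (butlast xs) = set ps \<union> set (butlast (x # qs))"
          using Cons.prems(1) by (auto simp: butlast_append)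
        moreover have "\<not> wsum (L z) < b" if "z \<in> set (butlast (x # qs))" for z
          using wsum_mono[OF ps_L[OF in_set_butlastD[OF that]] fin_L pos_L[of _ z]] over by linarith
        ultimately show ?thesis using w_ps by blast
      qed
      ultimately show ?thesis using G over w_x Cons.prems(3) by auto
    qed
  qed
qed simp

lemma sorted_wrt_list_exists:
  assumes "finite F" "\<And>a b c. lt a b \<Longrightarrow> lt b c \<Longrightarrow> lt a c" "\<And>a. \<not> lt a a"
    and "\<And>a b. a \<in> F \<Longrightarrow> b \<in> F \<Longrightarrow> a \<noteq> b \<Longrightarrow> lt a b \<or> lt b a"
  shows "\<exists>xs. set xs = F \<and> distinct xs \<and> sorted_wrt lt xs"
  using assms(1)
proof (induction F rule: finite_remove_induct)
  case (remove A)
  have "asymp_on A lt" "transp_on A lt"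
    using assms(2,3) unfolding asymp_on_def transp_on_def by blast+
  then obtain m where m: "m \<in> A" "\<forall>x\<in>A. x \<noteq> m \<longrightarrow> \<not> lt m x"
    using Finite_Set.bex_max_element[OF remove(1)] remove(2) by blast
  obtain xs where "set xs = A - {m}" "distinct xs" "sorted_wrt lt xs"
    using remove(4)[OF m(1)] by blast
  moreover have "lt x m" if "x \<in> A - {m}" for x
    using m remove(3) assms(4) that by blast
  ultimately have "set (xs @ [m]) = A \<and> distinct (xs @ [m]) \<and> sorted_wrt lt (xs @ [m])"
    using m(1) by (auto simp: sorted_wrt_append)
  then show ?case by blast
qed simp

lemma chD_subset: "chD P A \<subseteq> A"
  unfolding chD_def by auto

lemma chD_antimono: "A' \<subseteq> A \<Longrightarrow> y \<in> chD P A \<Longrightarrow> y \<in> A' \<Longrightarrow> y \<in> chD P A'"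
  unfolding chD_def by auto

lemma pref_onD:
  assumes "pref_on A r"
  shows pref_trans: "(a, b) \<in> r \<Longrightarrow> (b, c) \<in> r \<Longrightarrow> (a, c) \<in> r"
    and pref_irrefl: "(a, a) \<notin> r"
    and pref_total: "a \<in> A \<Longrightarrow> b \<in> A \<Longrightarrow> a \<noteq> b \<Longrightarrow> (a, b) \<in> r \<or> (b, a) \<in> r"
  using assms unfolding pref_on_def strict_linear_order_on_def
  by (auto dest: transD irreflD simp: total_on_def)

lemma pref_on_asym: "pref_on A r \<Longrightarrow> asym r"
  by (meson asymI pref_irrefl pref_trans)

lemma weakly_pref_trans:
  "pref_on A r \<Longrightarrow> weakly_pref r a b \<Longrightarrow> weakly_pref r b c \<Longrightarrow> weakly_pref r a c"
  unfolding weakly_pref_def by (metis pref_trans)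

lemma acc_set_None: "None \<in> acc_set X d"
  by (simp add: acc_set_def)

lemma acc_set_Some: "z \<in> X \<Longrightarrow> cD z = d \<Longrightarrow> Some z \<in> acc_set X d"
  by (simp add: acc_set_def doc_part_def)

lemma chD_iff: "y \<in> chD P A \<longleftrightarrow> y \<in> A \<and> (Some y, None) \<in> P (cD y) \<and>
    (\<forall>z\<in>A. cD z = cD y \<and> z \<noteq> y \<longrightarrow> (Some y, Some z) \<in> P (cD y))"
  by (simp add: chD_def)

lemma chD_update_other: "cD y \<noteq> d \<Longrightarrow> y \<in> chD (P(d := r)) A \<longleftrightarrow> y \<in> chD P A"
  by (simp add: chD_iff)

lemma chD_unique:
  assumes "asym (P d)" "y \<in> chD P A" "z \<in> chD P A" "cD y = d" "cD z = d"
  shows "y = z"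
  using assms unfolding chD_iff by (metis asymD)

lemma chD_best:
  assumes "finite A" "A \<subseteq> X" "pref_on (acc_set X d) (P d)"
    and "y \<in> A" "cD y = d" "(Some y, None) \<in> P d"
  shows "\<exists>m\<in>chD P A. cD m = d \<and> weakly_pref (P d) (Some m) (Some y)"
proof -
  let ?K = "{z \<in> A. cD z = d \<and> (Some z, None) \<in> P d}"
  let ?R = "\<lambda>a b. (Some a, Some b) \<in> P d"
  have "finite ?K" using assms(1) by simp
  moreover have "asymp_on ?K ?R" "transp_on ?K ?R"
    using pref_on_asym[OF assms(3)] pref_trans[OF assms(3)]
    unfolding asymp_on_def transp_on_def by (blast dest: asymD)+
  moreover have "?K \<noteq> {}" using assms(4-6) by blast
  ultimately obtain m where m: "m \<in> ?K" "\<forall>z\<in>?K. z \<noteq> m \<longrightarrow> \<not> ?R z m"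
    using Finite_Set.bex_min_element by blast
  have beats: "(Some m, Some z) \<in> P d" if "z \<in> A" "cD z = d" "z \<noteq> m" for z
  proof (cases "(Some z, None) \<in> P d")
    case True
    then have "(Some z, Some m) \<notin> P d" using m(2) that by blast
    moreover have "z \<in> X" "m \<in> X" using that(1) m(1) assms(2) by auto
    ultimately show ?thesis
      using that m(1) pref_total[OF assms(3) acc_set_Some acc_set_Some, of z m] by auto
  next
    case False
    then have "(None, Some z) \<in> P d"
      using that assms(2) pref_total[OF assms(3) acc_set_Some acc_set_None, of z] by auto
    then show ?thesis using m(1) pref_trans[OF assms(3)] by blast
  qed
  have "m \<in> chD P A" using m(1) beats by (auto simp: chD_iff)
  moreover have "weakly_pref (P d) (Some m) (Some y)"
    using beats[OF assms(4,5)] by (auto simp: weakly_pref_def)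
  ultimately show ?thesis using m(1) by blast
qed

lemma outcome_eq_Some:
  assumes "m \<in> Y" "cD m = d" "\<And>y. y \<in> Y \<Longrightarrow> cD y = d \<Longrightarrow> y = m"
  shows "outcome Y d = Some m"
proof -
  have "doc_part Y d = {m}"
  proof
    show "doc_part Y d \<subseteq> {m}" using assms(3) by (auto simp: doc_part_def)
  qed (use assms(1,2) in \<open>simp add: doc_part_def\<close>)
  then show ?thesis by (simp add: outcome_def)
qed

lemma outcome_eq_None:
  assumes "\<And>y. y \<in> Y \<Longrightarrow> cD y \<noteq> d"
  shows "outcome Y d = None"
proof -
  have "doc_part Y d = {}" using assms unfolding doc_part_def by blast
  then show ?thesis by (simp add: outcome_def)
qed

definition only_acceptable :: "'a \<Rightarrow> 'a option rel"
  where "only_acceptable x = {p. fst p = Some x \<and> snd p \<noteq> Some x}"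

definition truncate :: "'a option rel \<Rightarrow> 'a \<Rightarrow> 'a option rel"
  where "truncate r x = {p \<in> r. weakly_pref r (fst p) (Some x)}"

lemma asym_only_acceptable: "asym (only_acceptable x)"
  by (auto simp: only_acceptable_def intro!: asymI)

lemma asym_truncate: "asym r \<Longrightarrow> asym (truncate r x)"
  by (auto simp: truncate_def asym_on_def)

lemma chD_only_acceptable:
  "cD y = d \<Longrightarrow> y \<in> chD (P(d := only_acceptable x)) A \<longleftrightarrow> y = x \<and> x \<in> A"
  by (auto simp: chD_iff only_acceptable_def)

lemma chD_truncate:
  "cD y = d \<Longrightarrow> y \<in> chD (P(d := truncate (P d) x)) A \<longleftrightarrow>
    y \<in> chD P A \<and> weakly_pref (P d) (Some y) (Some x)"
  by (auto simp: chD_iff truncate_def)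

lemma chD_update_eqI:
  assumes "\<And>y. cD y = d \<Longrightarrow> y \<in> chD (P(d := r)) A \<longleftrightarrow> y \<in> chD (P(d := r')) A"
  shows "chD (P(d := r)) A = chD (P(d := r')) A"
  using assms chD_update_other[of _ d P] by blast

locale deferred_acceptance =
  fixes H :: "'h set" and X :: "('d, 'h) contract set" and B :: "'h \<Rightarrow> real"
    and tb :: "'h \<Rightarrow> ('d, 'h) contract rel"
  assumes finite_contracts: "finite X"
    and chH_subset: "S \<subseteq> X \<Longrightarrow> chH H B tb S \<subseteq> S"
    and chH_substitutes: "T \<subseteq> X \<Longrightarrow> S \<subseteq> T \<Longrightarrow> z \<in> S \<Longrightarrow> z \<in> chH H B tb T \<Longrightarrow> z \<in> chH H B tb S"
    and chH_card_mono: "T \<subseteq> X \<Longrightarrow> S \<subseteq> T \<Longrightarrow> card (chH H B tb S) \<le> card (chH H B tb T)"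
begin

abbreviation Ch :: "('d, 'h) contract set \<Rightarrow> ('d, 'h) contract set"
  where "Ch \<equiv> chH H B tb"

abbreviation rejected :: "('d \<Rightarrow> ('d, 'h) contract option rel) \<Rightarrow> nat \<Rightarrow> ('d, 'h) contract set"
  where "rejected P k \<equiv> rej H X B tb P k"

abbreviation offers :: "('d \<Rightarrow> ('d, 'h) contract option rel) \<Rightarrow> nat \<Rightarrow> ('d, 'h) contract set"
  where "offers P k \<equiv> chD P (X - rejected P k)"

definition final_round :: "('d \<Rightarrow> ('d, 'h) contract option rel) \<Rightarrow> nat"
  where "final_round P = (LEAST k. offers P k = Ch (offers P k))"

abbreviation rejections :: "('d \<Rightarrow> ('d, 'h) contract option rel) \<Rightarrow> ('d, 'h) contract set"
  where "rejections P \<equiv> rejected P (final_round P)"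

lemma rejected_subset: "rejected P k \<subseteq> X"
  by (induction k) (use chD_subset in auto)

lemma offers_subset: "offers P k \<subseteq> X"
  using chD_subset by blast

lemma offers_disjoint: "offers P k \<inter> rejected P k = {}"
  using chD_subset by blast

lemma gda_terminates: "\<exists>k. offers P k = Ch (offers P k)"
proof (rule ccontr)
  assume "\<nexists>k. offers P k = Ch (offers P k)"
  then have grow: "card (rejected P k) < card (rejected P (Suc k))" for k
  proof -
    obtain z where z: "z \<in> offers P k" "z \<notin> Ch (offers P k)"
      using chH_subset[OF offers_subset] \<open>\<nexists>k. _\<close> by blast
    then have "rejected P k \<subset> rejected P (Suc k)" using offers_disjoint by auto
    then show ?thesis
      using rejected_subset finite_contracts by (meson finite_subset psubset_card_mono)
  qed
  have "k \<le> card (rejected P k)" for k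
  proof (induction k)
    case (Suc k)
    then show ?case using grow[of k] by linarith
  qed simp
  moreover have "card (rejected P (Suc (card X))) \<le> card X"
    using card_mono[OF finite_contracts rejected_subset] .
  ultimately show False by (metis not_less_eq_eq)
qed

lemma gda_eq: "gda H X B tb P = offers P (final_round P)"
  by (simp add: gda_def final_round_def)

lemma gda_fixpoint: "Ch (gda H X B tb P) = gda H X B tb P"
  unfolding gda_eq final_round_def by (rule LeastI_ex[OF gda_terminates, symmetric])

lemma gda_subset: "gda H X B tb P \<subseteq> X"
  unfolding gda_eq by (rule offers_subset)

lemma gda_disjoint: "gda H X B tb P \<inter> rejections P = {}"
  unfolding gda_eq by (rule offers_disjoint)

definition cumulative_offers ::
    "('d \<Rightarrow> ('d, 'h) contract option rel) \<Rightarrow> ('d, 'h) contract set \<Rightarrow> ('d, 'h) contract set"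
  where "cumulative_offers P A = chD P (X - A) \<union> A"

lemma cumulative_offers_subset: "A \<subseteq> X \<Longrightarrow> cumulative_offers P A \<subseteq> X"
  unfolding cumulative_offers_def using chD_subset by blast

lemma cumulative_offers_mono: "A \<subseteq> A' \<Longrightarrow> cumulative_offers P A \<subseteq> cumulative_offers P A'"
  unfolding cumulative_offers_def using chD_antimono[where A' = "X - A'" and A = "X - A" and P = P] chD_subset by blast

lemma cumulative_offers_rejections:
  "cumulative_offers P (rejections P) = gda H X B tb P \<union> rejections P"
  by (simp add: cumulative_offers_def gda_eq)

text \<open>By substitutability a contract rejected in some round is rejected from every larger set of
  offers, so deferred acceptance rejects only contracts of any set A that contains everything
  hospitals reject from the offers it induces.\<close>

lemma rejected_subset_if_closed:
  assumes "A \<subseteq> X" "cumulative_offers P A - Ch (cumulative_offers P A) \<subseteq> A"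
  shows "rejected P k \<subseteq> A"
proof (induction k)
  case (Suc k)
  have offers_sub: "offers P k \<subseteq> cumulative_offers P A"
  proof
    fix z assume z: "z \<in> offers P k"
    have "z \<in> chD P (X - A)" if "z \<notin> A"
    proof (rule chD_antimono[OF _ z])
      show "X - A \<subseteq> X - rejected P k" using Suc.IH by blast
      show "z \<in> X - A" using that z offers_subset by blast
    qed
    then show "z \<in> cumulative_offers P A" by (auto simp: cumulative_offers_def)
  qed
  have "z \<in> A" if "z \<in> offers P k" "z \<notin> Ch (offers P k)" for z
  proof -
    have "z \<notin> Ch (cumulative_offers P A)"
      using chH_substitutes[OF cumulative_offers_subset[OF assms(1)] offers_sub that(1)] that(2)
      by blast
    then show ?thesis using assms(2) offers_sub that(1) by blast
  qed
  then show ?case using Suc.IH by auto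
qed simp

lemma offers_subset_later: "j \<le> k \<Longrightarrow> offers P j \<subseteq> offers P k \<union> rejected P k"
proof (induction k)
  case (Suc k)
  have step: "offers P k \<union> rejected P k \<subseteq> offers P (Suc k) \<union> rejected P (Suc k)"
  proof
    fix z assume "z \<in> offers P k \<union> rejected P k"
    moreover have "z \<in> offers P (Suc k)"
      if "z \<in> offers P k" "z \<in> Ch (offers P k)" "z \<notin> rejected P k"
    proof (rule chD_antimono[OF _ that(1)])
      show "X - rejected P (Suc k) \<subseteq> X - rejected P k" by auto
      show "z \<in> X - rejected P (Suc k)" using that offers_subset by auto
    qed
    ultimately show "z \<in> offers P (Suc k) \<union> rejected P (Suc k)" by auto
  qed
  show ?case
    using Suc step by (cases "j = Suc k") auto
qed simp

lemma rejected_in_earlier_round: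
  "z \<in> rejected P k \<Longrightarrow> \<exists>j<k. z \<in> offers P j \<and> z \<notin> Ch (offers P j)"
proof (induction k)
  case (Suc k)
  then show ?case by (cases "z \<in> rejected P k") (auto intro: less_SucI)
qed simp

lemma Ch_offers_rejected: "Ch (offers P k \<union> rejected P k) \<subseteq> offers P k"
proof
  fix z assume z: "z \<in> Ch (offers P k \<union> rejected P k)"
  have sub: "offers P k \<union> rejected P k \<subseteq> X" using offers_subset rejected_subset by blast
  show "z \<in> offers P k"
  proof (rule ccontr)
    assume "z \<notin> offers P k"
    then have "z \<in> rejected P k" using chH_subset[OF sub] z by blast
    then obtain j where j: "j < k" "z \<in> offers P j" "z \<notin> Ch (offers P j)"
      using rejected_in_earlier_round by blast
    then show False
      using chH_substitutes[OF sub offers_subset_later[of j k P] j(2) z] by simp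
  qed
qed

text \<open>Substitutability gives Ch T \<subseteq> Ch Y for the cumulative offers T \<supseteq> Y, and the law of
  aggregate demand upgrades this inclusion to equality.\<close>

lemma Ch_gda_rejections: "Ch (gda H X B tb P \<union> rejections P) = gda H X B tb P"
proof -
  let ?Y = "gda H X B tb P" and ?T = "gda H X B tb P \<union> rejections P"
  have T: "?T \<subseteq> X" using gda_subset rejected_subset by blast
  have "Ch ?T \<subseteq> ?Y" using Ch_offers_rejected[of P "final_round P"] by (simp add: gda_eq)
  then have sub: "Ch ?T \<subseteq> Ch ?Y" using chH_substitutes[OF T] by blast
  moreover have "card (Ch ?Y) \<le> card (Ch ?T)" using chH_card_mono[OF T] by blast
  moreover have "finite (Ch ?Y)" using gda_subset finite_contracts chH_subset
    by (meson finite_subset)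
  ultimately have "Ch ?T = Ch ?Y" by (simp add: card_seteq)
  then show ?thesis using gda_fixpoint by simp
qed

lemma rejections_least:
  assumes "chD P (X - rejections Q) = gda H X B tb Q"
  shows "rejections P \<subseteq> rejections Q"
proof (rule rejected_subset_if_closed[OF rejected_subset])
  have "cumulative_offers P (rejections Q) = gda H X B tb Q \<union> rejections Q"
    by (simp add: cumulative_offers_def assms)
  then show "cumulative_offers P (rejections Q) - Ch (cumulative_offers P (rejections Q))
      \<subseteq> rejections Q"
    using Ch_gda_rejections by auto
qed

lemma card_gda_le:
  assumes "chD P (X - rejections Q) = gda H X B tb Q"
  shows "card (gda H X B tb P) \<le> card (gda H X B tb Q)"
proof -
  have "cumulative_offers P (rejections P) \<subseteq> cumulative_offers P (rejections Q)"
    by (rule cumulative_offers_mono[OF rejections_least[OF assms]])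
  also have "\<dots> = gda H X B tb Q \<union> rejections Q" by (simp add: cumulative_offers_def assms)
  finally have "cumulative_offers P (rejections P) \<subseteq> gda H X B tb Q \<union> rejections Q" .
  then have "card (Ch (cumulative_offers P (rejections P))) \<le> card (Ch (gda H X B tb Q \<union> rejections Q))"
    using gda_subset rejected_subset by (intro chH_card_mono) auto
  then show ?thesis by (simp only: cumulative_offers_rejections Ch_gda_rejections)
qed

lemma gda_acceptable: "m \<in> gda H X B tb P \<Longrightarrow> (Some m, None) \<in> P (cD m)"
  by (simp add: gda_eq chD_iff)

lemma gda_unique:
  "asym (P d) \<Longrightarrow> y \<in> gda H X B tb P \<Longrightarrow> z \<in> gda H X B tb P \<Longrightarrow> cD y = d \<Longrightarrow> cD z = d \<Longrightarrow> y = z"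
  unfolding gda_eq by (rule chD_unique)

lemma outcome_gda:
  "asym (P d) \<Longrightarrow> m \<in> gda H X B tb P \<Longrightarrow> cD m = d \<Longrightarrow> outcome (gda H X B tb P) d = Some m"
  by (rule outcome_eq_Some) (use gda_unique in blast)+

lemma outcome_gda_cases:
  assumes "asym (P d)"
  obtains "outcome (gda H X B tb P) d = None" "\<And>y. y \<in> gda H X B tb P \<Longrightarrow> cD y \<noteq> d"
  | m where "m \<in> gda H X B tb P" "cD m = d" "outcome (gda H X B tb P) d = Some m"
  using outcome_gda[where P = P and d = d, OF assms] outcome_eq_None by metis

lemma gda_matches_if_available:
  assumes "pref_on (acc_set X e) (P e)" "y \<in> X - rejections P" "cD y = e" "(Some y, None) \<in> P e"
  shows "\<exists>m\<in>gda H X B tb P. cD m = e \<and> weakly_pref (P e) (Some m) (Some y)"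
  unfolding gda_eq using finite_contracts assms by (intro chD_best) auto

lemma gda_only_acceptable:
  assumes "asym r" "x \<in> gda H X B tb (P(d := r))" "cD x = d"
  shows "x \<in> gda H X B tb (P(d := only_acceptable x))"
proof -
  let ?P1 = "P(d := r)" and ?Px = "P(d := only_acceptable x)"
  have x: "x \<in> chD ?P1 (X - rejections ?P1)" using assms(2) by (simp add: gda_eq)
  have "chD ?Px (X - rejections ?P1) = gda H X B tb ?P1"
    unfolding gda_eq
  proof (rule chD_update_eqI)
    fix y :: "('d, 'h) contract" assume "cD y = d"
    then have "y \<in> chD ?Px (X - rejections ?P1) \<longleftrightarrow> y = x"
      using chD_only_acceptable[of y d P x] x chD_subset by blast
    moreover have "y \<in> chD ?P1 (X - rejections ?P1) \<longleftrightarrow> y = x"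
      using chD_unique[of ?P1 d y _ x] assms(1,3) x \<open>cD y = d\<close> by auto
    ultimately show "y \<in> chD ?Px (X - rejections ?P1) \<longleftrightarrow> y \<in> chD ?P1 (X - rejections ?P1)"
      by blast
  qed
  then have "rejections ?Px \<subseteq> rejections ?P1" by (rule rejections_least)
  moreover have "x \<notin> rejections ?P1" "x \<in> X" using assms(2) gda_disjoint gda_subset by blast+
  ultimately have "x \<in> chD ?Px (X - rejections ?Px)"
    using chD_only_acceptable[OF assms(3)] by blast
  then show ?thesis by (simp add: gda_eq)
qed

lemma card_matched_doctors:
  assumes "\<And>y. y \<in> X \<Longrightarrow> asym (P (cD y))"
  shows "card (cD ` gda H X B tb P) = card (gda H X B tb P)"
proof (rule card_image, rule inj_onI)
  fix y z assume yz: "y \<in> gda H X B tb P" "z \<in> gda H X B tb P" "cD y = cD z"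
  have "asym (P (cD y))" using assms[OF subsetD[OF gda_subset yz(1)]] .
  then show "y = z" by (rule gda_unique[OF _ yz(1,2) refl yz(3)[symmetric]])
qed

lemma asym_update:
  assumes "valid_profile D X P" "\<And>y. y \<in> X \<Longrightarrow> cD y \<in> D" "asym r" "y \<in> X"
  shows "asym ((P(d := r)) (cD y))"
proof -
  have "pref_on (acc_set X (cD y)) (P (cD y))"
    using assms(1) assms(2)[OF assms(4)] by (simp add: valid_profile_def)
  then show ?thesis using assms(3) pref_on_asym by (cases "cD y = d") auto
qed

lemma matched_doctors_subset:
  assumes prefs: "valid_profile D X P" and doctors: "\<And>y. y \<in> X \<Longrightarrow> cD y \<in> D"
    and rejections: "rejections (P(d := r)) \<subseteq> rejections (P(d := r'))"
  shows "cD ` gda H X B tb (P(d := r')) - {d} \<subseteq> cD ` gda H X B tb (P(d := r))"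
proof
  fix e assume "e \<in> cD ` gda H X B tb (P(d := r')) - {d}"
  then obtain y where y: "y \<in> gda H X B tb (P(d := r'))" "cD y = e" and "e \<noteq> d" by blast
  have "y \<in> X - rejections (P(d := r))"
    using y(1) gda_subset gda_disjoint rejections by blast
  moreover have "(Some y, None) \<in> (P(d := r)) e"
    using gda_acceptable[OF y(1)] y(2) \<open>e \<noteq> d\<close> by simp
  moreover have "pref_on (acc_set X e) ((P(d := r)) e)"
    using prefs doctors[OF subsetD[OF gda_subset y(1)]] y(2) \<open>e \<noteq> d\<close>
    by (simp add: valid_profile_def)
  ultimately show "e \<in> cD ` gda H X B tb (P(d := r))"
    using gda_matches_if_available[where P = "P(d := r)" and e = e and y = y] y(2) by blast
qed

text \<open>Truncating d's list just below x cannot leave d unmatched: otherwise deferred acceptance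
  under the truncation would be consistent with d accepting nothing but x, and the law of
  aggregate demand would forbid the resulting loss of a matched doctor.\<close>

lemma gda_truncation_matched:
  assumes prefs: "valid_profile D X P" and doctors: "\<And>y. y \<in> X \<Longrightarrow> cD y \<in> D"
    and x: "x \<in> gda H X B tb (P(d := only_acceptable x))" "cD x = d" "(Some x, None) \<in> P d"
  shows "\<exists>w\<in>gda H X B tb (P(d := truncate (P d) x)). cD w = d"
proof (rule ccontr)
  let ?Px = "P(d := only_acceptable x)" and ?Q = "P(d := truncate (P d) x)"
  assume unmatched: "\<not> (\<exists>w\<in>gda H X B tb ?Q. cD w = d)"
  have xX: "x \<in> X" using x(1) gda_subset by blast
  then have pref_d: "pref_on (acc_set X d) (P d)"
    using prefs doctors[OF xX] x(2) by (simp add: valid_profile_def)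
  have "x \<in> rejections ?Q"
  proof (rule ccontr)
    assume "x \<notin> rejections ?Q"
    then have "x \<in> X - rejections ?Q" using xX by blast
    moreover have "finite (X - rejections ?Q)" using finite_contracts by simp
    ultimately obtain m where "m \<in> chD P (X - rejections ?Q)" "cD m = d"
        "weakly_pref (P d) (Some m) (Some x)"
      using chD_best[where P = P and d = d, OF _ Diff_subset pref_d _ x(2,3)] by blast
    then have "m \<in> gda H X B tb ?Q" by (simp add: gda_eq chD_truncate)
    then show False using unmatched \<open>cD m = d\<close> by blast
  qed
  have eq: "chD ?Px (X - rejections ?Q) = gda H X B tb ?Q"
    unfolding gda_eq
  proof (rule chD_update_eqI)
    fix y :: "('d, 'h) contract" assume "cD y = d"
    then show "y \<in> chD ?Px (X - rejections ?Q) \<longleftrightarrow> y \<in> chD ?Q (X - rejections ?Q)"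
      using chD_only_acceptable[of y d P x] \<open>x \<in> rejections ?Q\<close> unmatched
      by (auto simp: gda_eq)
  qed
  have "cD ` gda H X B tb ?Q - {d} \<subseteq> cD ` gda H X B tb ?Px"
    by (rule matched_doctors_subset[OF prefs doctors rejections_least[OF eq]])
  moreover have "d \<notin> cD ` gda H X B tb ?Q" using unmatched by blast
  moreover have "d \<in> cD ` gda H X B tb ?Px" using x(1,2) by (rule rev_image_eqI[OF _ sym])
  ultimately have "cD ` gda H X B tb ?Q \<subset> cD ` gda H X B tb ?Px" by blast
  then have "card (cD ` gda H X B tb ?Q) < card (cD ` gda H X B tb ?Px)"
    using finite_contracts gda_subset by (meson finite_imageI finite_subset psubset_card_mono)
  moreover have "card (cD ` gda H X B tb ?Px) = card (gda H X B tb ?Px)"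
    by (rule card_matched_doctors) (rule asym_update[OF prefs doctors asym_only_acceptable])
  moreover have "card (cD ` gda H X B tb ?Q) = card (gda H X B tb ?Q)"
    by (rule card_matched_doctors)
      (rule asym_update[OF prefs doctors asym_truncate[OF pref_on_asym[OF pref_d]]])
  ultimately show False using card_gda_le[OF eq] by simp
qed

lemma gda_truncation_improves:
  assumes pref: "pref_on (acc_set X d) (P d)"
    and w: "w \<in> gda H X B tb (P(d := truncate (P d) x))" "cD w = d"
  shows "\<exists>m\<in>gda H X B tb P. cD m = d \<and> weakly_pref (P d) (Some m) (Some x)"
proof -
  let ?Q = "P(d := truncate (P d) x)"
  have wQ: "w \<in> chD ?Q (X - rejections ?Q)" using w(1) by (simp add: gda_eq)
  then have wP: "w \<in> chD P (X - rejections ?Q)" "weakly_pref (P d) (Some w) (Some x)"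
    using chD_truncate[OF w(2)] by blast+
  have "chD (P(d := P d)) (X - rejections ?Q) = chD ?Q (X - rejections ?Q)"
  proof (rule chD_update_eqI)
    fix y :: "('d, 'h) contract" assume y: "cD y = d"
    have "y \<in> chD P (X - rejections ?Q) \<longleftrightarrow> y = w"
      using chD_unique[OF pref_on_asym[OF pref] _ wP(1) y w(2)] wP(1) by blast
    moreover have "y \<in> chD ?Q (X - rejections ?Q) \<longleftrightarrow> y = w"
      using chD_unique[of ?Q d y _ w] asym_truncate[OF pref_on_asym[OF pref]] wQ y w(2) by auto
    ultimately show "y \<in> chD (P(d := P d)) (X - rejections ?Q) \<longleftrightarrow> y \<in> chD ?Q (X - rejections ?Q)"
      by simp
  qed
  then have "rejections P \<subseteq> rejections ?Q" by (intro rejections_least) (simp add: gda_eq)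
  then have "w \<in> X - rejections P" using wQ chD_subset by blast
  then obtain m where "m \<in> gda H X B tb P" "cD m = d" "weakly_pref (P d) (Some m) (Some w)"
    using gda_matches_if_available[where P = P and e = d, OF pref _ w(2)] wP(1) w(2)
    by (auto simp: chD_iff)
  then show ?thesis using weakly_pref_trans[OF pref _ wP(2)] by blast
qed

theorem gda_strategy_proof:
  assumes doctors: "\<And>y. y \<in> X \<Longrightarrow> cD y \<in> D"
  shows "strategy_proof D X (gda H X B tb)"
  unfolding strategy_proof_def
proof (intro allI impI, elim conjE)
  fix P d r
  assume prefs: "valid_profile D X P" and "d \<in> D" and r: "pref_on (acc_set X d) r"
  have pref_d: "pref_on (acc_set X d) (P d)" using prefs \<open>d \<in> D\<close> by (simp add: valid_profile_def)
  have unmatched_worst: "weakly_pref (P d) (outcome (gda H X B tb P) d) None"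
    by (cases rule: outcome_gda_cases[where P = P and d = d, OF pref_on_asym[OF pref_d]])
      (auto simp: weakly_pref_def dest: gda_acceptable)
  have "asym ((P(d := r)) d)" using pref_on_asym[OF r] by simp
  then show "weakly_pref (P d) (outcome (gda H X B tb P) d) (outcome (gda H X B tb (P(d := r))) d)"
  proof (cases rule: outcome_gda_cases[where P = "P(d := r)" and d = d])
    case 1
    then show ?thesis using unmatched_worst by simp
  next
    case (2 x)
    show ?thesis
    proof (cases "(Some x, None) \<in> P d")
      case True
      have "x \<in> gda H X B tb (P(d := only_acceptable x))"
        using gda_only_acceptable[OF pref_on_asym[OF r]] 2 by simp
      then obtain w where "w \<in> gda H X B tb (P(d := truncate (P d) x))" "cD w = d"
        using gda_truncation_matched[OF prefs doctors _ \<open>cD x = d\<close> True] by blast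
      then obtain m where m: "m \<in> gda H X B tb P" "cD m = d" "weakly_pref (P d) (Some m) (Some x)"
        using gda_truncation_improves[where P = P and d = d, OF pref_d] by blast
      then show ?thesis
        using outcome_gda[where P = P and d = d, OF pref_on_asym[OF pref_d] m(1,2)] 2 by simp
    next
      case False
      have "x \<in> X" using 2 gda_subset by blast
      then have "(None, Some x) \<in> P d"
        using False pref_total[OF pref_d acc_set_Some acc_set_None] 2 by blast
      then have "weakly_pref (P d) None (Some x)" by (simp add: weakly_pref_def)
      then show ?thesis using weakly_pref_trans[OF pref_d unmatched_worst] 2 by simp
    qed
  qed
qed

lemma preferred_contract_rejected:
  assumes prefs: "valid_profile D X P" and doctors: "\<And>y. y \<in> X \<Longrightarrow> cD y \<in> D"
    and x: "x \<in> X" "x \<notin> gda H X B tb P"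
    and pref_x: "(Some x, outcome (gda H X B tb P) (cD x)) \<in> P (cD x)"
  shows "x \<in> rejections P"
proof (rule ccontr)
  assume "x \<notin> rejections P"
  with x have avail: "x \<in> X - rejections P" by blast
  have pref: "pref_on (acc_set X (cD x)) (P (cD x))"
    using prefs doctors[OF x(1)] by (simp add: valid_profile_def)
  show False
  proof (cases rule: outcome_gda_cases[where P = P and d = "cD x", OF pref_on_asym[OF pref]])
    case 1
    then show False
      using gda_matches_if_available[where P = P, OF pref avail refl] pref_x by auto
  next
    case (2 m)
    then have "(Some m, Some x) \<in> P (cD x)"
      using avail x(2) by (auto simp: gda_eq chD_iff)
    moreover have "(Some x, Some m) \<in> P (cD x)" using pref_x 2 by simp
    ultimately show False using pref_on_asym[OF pref] by (blast dest: asymD)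
  qed
qed

lemma gda_is_matching:
  assumes prefs: "valid_profile D X P" and doctors: "\<And>y. y \<in> X \<Longrightarrow> cD y \<in> D"
  shows "is_matching (gda H X B tb P)"
  unfolding is_matching_def
proof
  fix e
  have fin: "finite (doc_part (gda H X B tb P) e)"
    using finite_contracts gda_subset by (auto simp: doc_part_def intro: finite_subset)
  have "y = z" if "y \<in> doc_part (gda H X B tb P) e" "z \<in> doc_part (gda H X B tb P) e" for y z
  proof -
    have y: "y \<in> gda H X B tb P" "cD y = e" and z: "z \<in> gda H X B tb P" "cD z = e"
      using that by (simp_all add: doc_part_def)
    have "asym (P e)"
      using prefs doctors[OF subsetD[OF gda_subset y(1)]] y(2) pref_on_asym
      by (auto simp: valid_profile_def)
    then show ?thesis by (rule gda_unique[OF _ y(1) z(1) y(2) z(2)])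
  qed
  then show "finite (doc_part (gda H X B tb P) e) \<and> card (doc_part (gda H X B tb P) e) \<le> 1"
    using fin by (simp add: card_le_Suc0_iff_eq)
qed

end

locale budget_market =
  fixes H :: "'h set" and X :: "('d, 'h) contract set" and B :: "'h \<Rightarrow> real"
    and tb :: "'h \<Rightarrow> ('d, 'h) contract rel"
  assumes finite_X: "finite X" and finite_H: "finite H"
    and hospital_in_H: "\<And>x. x \<in> X \<Longrightarrow> cH x \<in> H"
    and wage_pos: "\<And>x. x \<in> X \<Longrightarrow> 0 < cW x"
    and budget_pos: "\<And>h. h \<in> H \<Longrightarrow> 0 < B h"
    and hospital_nonempty: "\<And>h. h \<in> H \<Longrightarrow> hosp_part X h \<noteq> {}"
    and tie_break: "\<And>h. h \<in> H \<Longrightarrow> strict_linear_order_on (hosp_part X h) (tb h)"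
begin

lemma finite_hosp_part: "S \<subseteq> hosp_part X h \<Longrightarrow> finite S"
  by (meson finite_X hosp_part_subset finite_subset subset_trans)

lemma hlt_trans:
  assumes "h \<in> H" "hlt tb h a b" "hlt tb h b c"
  shows "hlt tb h a c"
proof -
  have "trans (tb h)" using tie_break[OF assms(1)] by (simp add: strict_linear_order_on_def)
  then show ?thesis using assms(2,3) transD[of "tb h" a b c] unfolding hlt_def by auto
qed

lemma hlt_irrefl: "h \<in> H \<Longrightarrow> \<not> hlt tb h a a"
  using tie_break[of h] irreflD[of "tb h" a] by (simp add: strict_linear_order_on_def hlt_def)

lemma hlt_asym: "h \<in> H \<Longrightarrow> hlt tb h a b \<Longrightarrow> \<not> hlt tb h b a"
  using hlt_trans hlt_irrefl by blast

lemma hlt_total: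
  assumes "h \<in> H" "a \<in> hosp_part X h" "b \<in> hosp_part X h" "a \<noteq> b"
  shows "hlt tb h a b \<or> hlt tb h b a"
proof -
  have "total_on (hosp_part X h) (tb h)"
    using tie_break[OF assms(1)] by (simp add: strict_linear_order_on_def)
  then have "(a, b) \<in> tb h \<or> (b, a) \<in> tb h" using assms(2-4) by (simp add: total_on_def)
  then show ?thesis unfolding hlt_def by linarith
qed

lemma hlt_wage: "hlt tb h a b \<Longrightarrow> cW a \<le> cW b"
  by (auto simp: hlt_def)

lemma sorted_list:
  assumes "h \<in> H" "S \<subseteq> hosp_part X h"
  shows "set (sorted_list tb h S) = S" "distinct (sorted_list tb h S)"
    "sorted_wrt (hlt tb h) (sorted_list tb h S)"
proof -
  have "\<exists>xs. set xs = S \<and> distinct xs \<and> sorted_wrt (hlt tb h) xs"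
  proof (rule sorted_wrt_list_exists[OF finite_hosp_part[OF assms(2)]])
    show "hlt tb h a c" if "hlt tb h a b" "hlt tb h b c" for a b c
      using hlt_trans[OF assms(1) that] .
    show "\<not> hlt tb h a a" for a using hlt_irrefl[OF assms(1)] .
    show "hlt tb h a b \<or> hlt tb h b a" if "a \<in> S" "b \<in> S" "a \<noteq> b" for a b
      using hlt_total[OF assms(1)] that assms(2) by blast
  qed
  then have "set (sorted_list tb h S) = S \<and> distinct (sorted_list tb h S)
      \<and> sorted_wrt (hlt tb h) (sorted_list tb h S)"
    unfolding sorted_list_def by (rule someI_ex)
  then show "set (sorted_list tb h S) = S" "distinct (sorted_list tb h S)"
    "sorted_wrt (hlt tb h) (sorted_list tb h S)" by simp_all
qed

lemma wage_pos_part: "S \<subseteq> hosp_part X h \<Longrightarrow> z \<in> S \<Longrightarrow> 0 < cW z"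
  using wage_pos hosp_part_subset[of X h] by blast

lemma wbar_ge: "z \<in> hosp_part X h \<Longrightarrow> cW z \<le> wbar X h"
  unfolding wbar_def using finite_hosp_part[of "hosp_part X h" h] by simp

lemma wbar_pos: "h \<in> H \<Longrightarrow> 0 < wbar X h"
  using hospital_nonempty wage_pos_part[of "hosp_part X h" h] wbar_ge
  by (meson all_not_in_conv dual_order.refl order_less_le_trans)

definition wage_prefix :: "'h \<Rightarrow> ('d, 'h) contract set \<Rightarrow> ('d, 'h) contract \<Rightarrow> ('d, 'h) contract set"
  where "wage_prefix h S z = {y \<in> S. hlt tb h y z \<or> y = z}"

definition affordable :: "'h \<Rightarrow> ('d, 'h) contract set \<Rightarrow> ('d, 'h) contract set"
  where "affordable h S = {z \<in> S. wsum (wage_prefix h S z) < B h}"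

definition is_top :: "'h \<Rightarrow> ('d, 'h) contract set \<Rightarrow> ('d, 'h) contract \<Rightarrow> bool"
  where "is_top h S z \<longleftrightarrow> z \<in> S \<and> (\<forall>y\<in>S. y \<noteq> z \<longrightarrow> hlt tb h y z)"

lemma is_top_unique: "h \<in> H \<Longrightarrow> is_top h S a \<Longrightarrow> is_top h S b \<Longrightarrow> a = b"
  by (metis hlt_asym is_top_def)

lemma wage_prefix_subset: "wage_prefix h S z \<subseteq> S"
  by (auto simp: wage_prefix_def)

lemma wsum_wage_prefix_mono:
  assumes "S \<subseteq> T" "T \<subseteq> hosp_part X h"
  shows "wsum (wage_prefix h S z) \<le> wsum (wage_prefix h T z)"
proof (rule wsum_mono)
  show "wage_prefix h S z \<subseteq> wage_prefix h T z" using assms(1) by (auto simp: wage_prefix_def)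
  show "finite (wage_prefix h T z)"
    using assms(2) wage_prefix_subset[of h T z] finite_hosp_part by blast
  show "0 < cW y" if "y \<in> wage_prefix h T z" for y
    using that assms(2) wage_prefix_subset[of h T z] wage_pos_part by blast
qed

lemma chh_greedy:
  assumes "h \<in> H" "S \<subseteq> hosp_part X h" "S \<noteq> {}"
  obtains m where "is_top h S m" "chh B tb h S = insert m (affordable h S)"
    "chh B tb h S \<noteq> S \<Longrightarrow> B h \<le> wsum (chh B tb h S)"
    "wsum (chh B tb h S) < B h + wbar X h"
proof -
  let ?xs = "sorted_list tb h S"
  note xs = sorted_list[OF assms(1,2)]
  have ne: "?xs \<noteq> []" using xs(1) assms(3) by auto
  have G0: "greedy (B h) (set []) ?xs
      = {z \<in> set (butlast ?xs). wsum {y \<in> set ?xs. hlt tb h y z \<or> y = z} < B h} \<union> {last ?xs}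
    \<and> (greedy (B h) (set []) ?xs \<noteq> set ?xs \<longrightarrow> B h \<le> wsum (greedy (B h) (set []) ?xs))
    \<and> wsum (greedy (B h) (set []) ?xs) < B h + cW (last ?xs)"
  proof (rule greedy_sorted)
    show "\<not> hlt tb h c a" if "hlt tb h a c" for a c using hlt_asym[OF assms(1) that] .
    show "0 < cW z" if "z \<in> set ?xs" for z using wage_pos_part[OF assms(2)] that xs(1) by blast
    show "wsum (set []) < B h" using budget_pos[OF assms(1)] by (simp add: wsum_def)
  qed (use xs ne hlt_wage in simp_all)
  note G = G0[unfolded xs(1) empty_set, folded wage_prefix_def]
  have last: "last ?xs \<in> S" using last_in_set[OF ne] unfolding xs(1) .
  have S: "S = insert (last ?xs) (set (butlast ?xs))"
    using append_butlast_last_id[OF ne] xs(1) by (metis Un_insert_right empty_set list.simps(15)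
        set_append sup_bot.right_neutral)
  have top: "is_top h S (last ?xs)"
    unfolding is_top_def
  proof (intro conjI ballI impI)
    fix y assume "y \<in> S" "y \<noteq> last ?xs"
    then have "y \<in> set (butlast ?xs)" using S by blast
    then show "hlt tb h y (last ?xs)"
      using xs(3) ne by (metis append_butlast_last_id sorted_wrt_append list.set_intros(1))
  qed (fact last)
  have "chh B tb h S = insert (last ?xs) (affordable h S)"
    using G S unfolding chh_def affordable_def by auto
  moreover have "cW (last ?xs) \<le> wbar X h" using last assms(2) wbar_ge by blast
  ultimately show ?thesis using that top G xs(1) unfolding chh_def by fastforce
qed

lemma chh_empty: "h \<in> H \<Longrightarrow> chh B tb h {} = {}"
  using sorted_list(1)[of h "{}"] by (simp add: chh_def)

lemma chh_subset:
  assumes "h \<in> H" "S \<subseteq> hosp_part X h"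
  shows "chh B tb h S \<subseteq> S"
proof (cases "S = {}")
  case False
  then obtain m where "is_top h S m" "chh B tb h S = insert m (affordable h S)"
    using chh_greedy[OF assms] by blast
  then show ?thesis by (auto simp: affordable_def is_top_def)
qed (simp add: chh_empty assms)

lemma chh_saturated:
  assumes "h \<in> H" "S \<subseteq> hosp_part X h" "chh B tb h S \<noteq> S"
  shows "B h \<le> wsum (chh B tb h S)"
proof -
  have "S \<noteq> {}" using assms chh_empty by auto
  then show ?thesis using chh_greedy[OF assms(1,2)] assms(3) by blast
qed

lemma wsum_chh_less:
  assumes "h \<in> H" "S \<subseteq> hosp_part X h"
  shows "wsum (chh B tb h S) < B h + wbar X h"
proof (cases "S = {}")
  case True
  then show ?thesis
    using chh_empty budget_pos wbar_pos assms(1) by (simp add: wsum_def add_pos_pos)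
next
  case False
  then show ?thesis using chh_greedy[OF assms] by blast
qed

lemma affordable_antimono:
  assumes "S \<subseteq> T" "T \<subseteq> hosp_part X h" "z \<in> S" "z \<in> affordable h T"
  shows "z \<in> affordable h S"
  using wsum_wage_prefix_mono[OF assms(1,2), of z] assms(3,4) by (auto simp: affordable_def)

theorem chh_substitutes:
  assumes "h \<in> H" "T \<subseteq> hosp_part X h" "S \<subseteq> T" "z \<in> S" "z \<in> chh B tb h T"
  shows "z \<in> chh B tb h S"
proof -
  have S: "S \<subseteq> hosp_part X h" using assms(3,2) by (rule order.trans)
  have "T \<noteq> {}" "S \<noteq> {}" using assms(3,4) by auto
  obtain t where t: "is_top h T t" and chT: "chh B tb h T = insert t (affordable h T)"
    by (rule chh_greedy[OF assms(1,2) \<open>T \<noteq> {}\<close>])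
  obtain s where s: "is_top h S s" and chS: "chh B tb h S = insert s (affordable h S)"
    by (rule chh_greedy[OF assms(1) S \<open>S \<noteq> {}\<close>])
  show ?thesis
  proof (cases "z = t")
    case True
    then have "is_top h S z" using t assms(3,4) by (auto simp: is_top_def)
    then show ?thesis using chS is_top_unique[OF assms(1) s] by simp
  next
    case False
    then show ?thesis using chT chS affordable_antimono[OF assms(3,2,4)] assms(5) by simp
  qed
qed

lemma wage_prefix_insert:
  assumes "z \<in> S" "y \<notin> S"
  shows "wage_prefix h (insert y S) z =
    (if hlt tb h y z then insert y (wage_prefix h S z) else wage_prefix h S z)"
  using assms by (auto simp: wage_prefix_def)

lemma wsum_wage_prefix_insert:
  assumes "S \<subseteq> hosp_part X h" "y \<notin> S" "z \<in> S" "hlt tb h y z"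
  shows "wsum (wage_prefix h (insert y S) z) = cW y + wsum (wage_prefix h S z)"
proof -
  have "finite (wage_prefix h S z)"
    using assms(1) wage_prefix_subset[of h S z] finite_hosp_part by blast
  moreover have "y \<notin> wage_prefix h S z" using assms(2) wage_prefix_subset[of h S z] by blast
  ultimately show ?thesis using assms by (simp add: wage_prefix_insert wsum_insert)
qed

lemma affordable_lost:
  assumes "S \<subseteq> hosp_part X h" "y \<notin> S"
    and "l \<in> affordable h S" "l \<notin> affordable h (insert y S)"
  shows "hlt tb h y l" "B h \<le> cW y + wsum (wage_prefix h S l)"
proof -
  have l: "l \<in> S" using assms(3) by (simp add: affordable_def)
  show "hlt tb h y l"
    using assms(3,4) wage_prefix_insert[OF l assms(2)] by (auto simp: affordable_def split: if_splits)
  then show "B h \<le> cW y + wsum (wage_prefix h S l)"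
    using assms(4) wsum_wage_prefix_insert[OF assms(1,2) l] l by (simp add: affordable_def)
qed

lemma affordable_lost_unique:
  assumes "h \<in> H" "S \<subseteq> hosp_part X h" "y \<in> hosp_part X h" "y \<notin> S"
    and "l1 \<in> affordable h S - affordable h (insert y S)"
    and "l2 \<in> affordable h S - affordable h (insert y S)"
  shows "l1 = l2"
proof (rule ccontr)
  assume ne: "l1 \<noteq> l2"
  have S: "l1 \<in> S" "l2 \<in> S" using assms(5,6) by (simp_all add: affordable_def)
  have no_order: False if "l \<in> affordable h S - affordable h (insert y S)"
      "l' \<in> affordable h S - affordable h (insert y S)" "hlt tb h l l'" for l l'
  proof -
    have l: "l \<in> S" "l' \<in> S" using that(1,2) by (simp_all add: affordable_def)
    have "insert l' (wage_prefix h S l) \<subseteq> wage_prefix h S l'"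
      using that(3) l hlt_trans[OF assms(1), of _ l l'] by (auto simp: wage_prefix_def)
    moreover have "l' \<notin> wage_prefix h S l"
      using that(3) hlt_asym[OF assms(1), of l l'] hlt_irrefl[OF assms(1), of l]
      by (auto simp: wage_prefix_def)
    ultimately have "cW l' + wsum (wage_prefix h S l) \<le> wsum (wage_prefix h S l')"
      using wsum_mono[of _ "wage_prefix h S l'"] wsum_insert[of "wage_prefix h S l" l']
        finite_hosp_part[OF assms(2)] wage_pos_part[OF assms(2)] wage_prefix_subset[of h S]
      by (smt (verit, best) finite_subset subsetD)
    moreover have "cW y \<le> cW l'" using hlt_wage affordable_lost(1)[OF assms(2,4)] that(2) by blast
    moreover have "B h \<le> cW y + wsum (wage_prefix h S l)"
      using affordable_lost(2)[OF assms(2,4)] that(1) by blast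
    moreover have "wsum (wage_prefix h S l') < B h" using that(2) by (simp add: affordable_def)
    ultimately show False by linarith
  qed
  have "hlt tb h l1 l2 \<or> hlt tb h l2 l1" using hlt_total[OF assms(1)] S assms(2) ne by blast
  then show False using no_order assms(5,6) by blast
qed

lemma affordable_gained:
  assumes "h \<in> H" "S \<subseteq> hosp_part X h" "y \<notin> S"
    and "l \<in> affordable h S - affordable h (insert y S)"
  shows "y \<in> affordable h (insert y S)"
proof -
  have lost: "l \<in> affordable h S" "l \<notin> affordable h (insert y S)" using assms(4) by simp_all
  have l: "l \<in> S" "hlt tb h y l" "wsum (wage_prefix h S l) < B h"
    using lost affordable_lost(1)[OF assms(2,3) lost] by (simp_all add: affordable_def)
  have fin: "finite (wage_prefix h S l)"
    using assms(2) wage_prefix_subset[of h S l] finite_hosp_part by blast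
  have finy: "finite (wage_prefix h S y)"
    using assms(2) wage_prefix_subset[of h S y] finite_hosp_part by blast
  have sub: "wage_prefix h S y \<subseteq> wage_prefix h S l - {l}"
  proof
    fix u assume "u \<in> wage_prefix h S y"
    then have u: "u \<in> S" "hlt tb h u y" using assms(3) by (auto simp: wage_prefix_def)
    have "hlt tb h u l" by (rule hlt_trans[OF assms(1) u(2) l(2)])
    moreover have "u \<noteq> l" using u(2) hlt_asym[OF assms(1) l(2)] by blast
    ultimately show "u \<in> wage_prefix h S l - {l}" using u(1) by (simp add: wage_prefix_def)
  qed
  have "wage_prefix h (insert y S) y = insert y (wage_prefix h S y)"
    using assms(3) by (auto simp: wage_prefix_def)
  moreover have "y \<notin> wage_prefix h S y" using assms(3) by (simp add: wage_prefix_def)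
  ultimately have "wsum (wage_prefix h (insert y S) y) = cW y + wsum (wage_prefix h S y)"
    using finy by (simp add: wsum_insert)
  also have "\<dots> \<le> cW y + wsum (wage_prefix h S l - {l})"
  proof -
    have "0 < cW u" if "u \<in> wage_prefix h S l - {l}" for u
      using that wage_prefix_subset[of h S l] wage_pos_part[OF assms(2)] by blast
    then show ?thesis using wsum_mono[OF sub] fin by simp
  qed
  also have "\<dots> \<le> cW l + wsum (wage_prefix h S l - {l})" using hlt_wage[OF l(2)] by simp
  also have "\<dots> = wsum (wage_prefix h S l)"
    using wsum_insert[of "wage_prefix h S l - {l}" l] fin l(1)
    by (simp add: insert_absorb wage_prefix_def)
  finally show ?thesis using l(3) by (simp add: affordable_def)
qed

lemma card_affordable_insert:
  assumes "h \<in> H" "S \<subseteq> hosp_part X h" "y \<in> hosp_part X h" "y \<notin> S"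
  shows "card (affordable h S) \<le> card (affordable h (insert y S))"
proof -
  let ?A = "affordable h S" and ?A' = "affordable h (insert y S)"
  have fin: "finite ?A'" using assms(2,3) finite_hosp_part[of "insert y S"]
    by (simp add: affordable_def)
  show ?thesis
  proof (cases "?A \<subseteq> ?A'")
    case True
    then show ?thesis using fin by (rule card_mono[rotated])
  next
    case False
    then obtain l where l: "l \<in> ?A - ?A'" by blast
    have "?A \<subseteq> insert l (?A' - {y})"
    proof
      fix a assume a: "a \<in> ?A"
      then have "a \<noteq> y" using assms(4) by (auto simp: affordable_def)
      moreover have "a = l" if "a \<notin> ?A'"
        using affordable_lost_unique[OF assms _ l] a that by blast
      ultimately show "a \<in> insert l (?A' - {y})" by blast
    qed
    then have "card ?A \<le> card (insert l (?A' - {y}))" by (rule card_mono[rotated]) (simp add: fin)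
    also have "\<dots> \<le> Suc (card (?A' - {y}))" by (simp add: card_insert_if fin)
    also have "\<dots> = card ?A'"
      using card_Suc_Diff1[OF fin affordable_gained[OF assms(1,2,4) l]] .
    finally show ?thesis .
  qed
qed

lemma card_affordable_mono:
  assumes "h \<in> H" "T \<subseteq> hosp_part X h" "S \<subseteq> T"
  shows "card (affordable h S) \<le> card (affordable h T)"
proof -
  have fin: "finite (T - S)" using finite_hosp_part[OF assms(2)] by simp
  have "card (affordable h S) \<le> card (affordable h (S \<union> F))" if "F \<subseteq> T - S" for F
    using finite_subset[OF that fin] that
  proof (induction F rule: finite_subset_induct')
    case (insert y F)
    have "card (affordable h (S \<union> F)) \<le> card (affordable h (insert y (S \<union> F)))"
      using insert assms by (intro card_affordable_insert) auto
    with insert show ?case by simp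
  qed simp
  from this[of "T - S"] show ?thesis using assms(3) by (simp add: Un_absorb1)
qed

lemma wage_prefix_top: "is_top h S t \<Longrightarrow> wage_prefix h S t = S"
  by (auto simp: is_top_def wage_prefix_def)

theorem chh_card_mono:
  assumes "h \<in> H" "T \<subseteq> hosp_part X h" "S \<subseteq> T"
  shows "card (chh B tb h S) \<le> card (chh B tb h T)"
proof (cases "S = {}")
  case True
  then show ?thesis using chh_empty[OF assms(1)] by simp
next
  case False
  have S: "S \<subseteq> hosp_part X h" using assms(3,2) by (rule order.trans)
  have finT: "finite T" using finite_hosp_part[OF assms(2)] .
  obtain s where "chh B tb h S = insert s (affordable h S)"
    using chh_greedy[OF assms(1) S False] by blast
  then have card_S: "card (chh B tb h S) \<le> Suc (card (affordable h S))"
    using finite_hosp_part[OF S] by (simp add: card_insert_if affordable_def)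
  show ?thesis
  proof (cases "wsum T < B h")
    case True
    have "chh B tb h T = T"
    proof (rule ccontr)
      assume "chh B tb h T \<noteq> T"
      then have "B h \<le> wsum (chh B tb h T)" by (rule chh_saturated[OF assms(1,2)])
      also have "\<dots> \<le> wsum T"
        using chh_subset[OF assms(1,2)] finT wage_pos_part[OF assms(2)] by (rule wsum_mono)
      finally show False using True by simp
    qed
    moreover have "card (chh B tb h S) \<le> card T"
      using chh_subset[OF assms(1) S] assms(3) finT by (meson card_mono order.trans)
    ultimately show ?thesis by simp
  next
    case False
    have "T \<noteq> {}" using \<open>S \<noteq> {}\<close> assms(3) by blast
    then obtain t where t: "is_top h T t" and chT: "chh B tb h T = insert t (affordable h T)"
      using chh_greedy[OF assms(1,2)] by blast
    have "t \<notin> affordable h T" using False wage_prefix_top[OF t] by (simp add: affordable_def)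
    then have "card (chh B tb h T) = Suc (card (affordable h T))"
      using chT finT by (simp add: affordable_def)
    then show ?thesis using card_S card_affordable_mono[OF assms] by simp
  qed
qed

lemma chh_in_hosp_part:
  assumes "h \<in> H" "S \<subseteq> X" "z \<in> chh B tb h (hosp_part S h)"
  shows "cH z = h \<and> z \<in> S"
proof -
  have "z \<in> hosp_part S h" using chh_subset[OF assms(1) hosp_part_mono[OF assms(2)]] assms(3) ..
  then show ?thesis by (simp add: hosp_part_def)
qed

lemma hosp_part_chH:
  assumes "h \<in> H" "S \<subseteq> X"
  shows "hosp_part (chH H B tb S) h = chh B tb h (hosp_part S h)"
proof
  show "hosp_part (chH H B tb S) h \<subseteq> chh B tb h (hosp_part S h)"
  proof
    fix x assume "x \<in> hosp_part (chH H B tb S) h"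
    then obtain h' where h': "h' \<in> H" "x \<in> chh B tb h' (hosp_part S h')" "cH x = h"
      by (auto simp: chH_def hosp_part_def)
    then show "x \<in> chh B tb h (hosp_part S h)" using chh_in_hosp_part[OF h'(1) assms(2) h'(2)] by simp
  qed
  show "chh B tb h (hosp_part S h) \<subseteq> hosp_part (chH H B tb S) h"
  proof
    fix x assume x: "x \<in> chh B tb h (hosp_part S h)"
    then have "cH x = h" using chh_in_hosp_part[OF assms] by blast
    then show "x \<in> hosp_part (chH H B tb S) h" using x assms(1) by (auto simp: chH_def hosp_part_def)
  qed
qed

lemma card_chH:
  assumes "S \<subseteq> X"
  shows "card (chH H B tb S) = (\<Sum>h\<in>H. card (chh B tb h (hosp_part S h)))"
proof -
  have "finite (chh B tb h (hosp_part S h))" if "h \<in> H" for h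
    using finite_hosp_part[OF hosp_part_mono[OF assms]] chh_subset[OF that hosp_part_mono[OF assms]]
    by (rule finite_subset[rotated])
  moreover have "chh B tb h (hosp_part S h) \<inter> chh B tb h' (hosp_part S h') = {}"
    if "h \<in> H" "h' \<in> H" "h \<noteq> h'" for h h'
    using chh_in_hosp_part[OF that(1) assms] chh_in_hosp_part[OF that(2) assms] that(3) by blast
  ultimately show ?thesis unfolding chH_def by (intro card_UN_disjoint[OF finite_H]) auto
qed

sublocale deferred_acceptance H X B tb
proof
  show "finite X" by (rule finite_X)
  show "chH H B tb S \<subseteq> S" if "S \<subseteq> X" for S
    using chh_in_hosp_part[OF _ that] by (auto simp: chH_def)
  show "z \<in> chH H B tb S"
    if T: "T \<subseteq> X" and ST: "S \<subseteq> T" and z: "z \<in> S" "z \<in> chH H B tb T" for S T z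
  proof -
    obtain h where h: "h \<in> H" "z \<in> chh B tb h (hosp_part T h)" using z(2) by (auto simp: chH_def)
    then have "cH z = h" using chh_in_hosp_part[OF _ T] by blast
    then have "z \<in> chh B tb h (hosp_part S h)"
      using chh_substitutes[OF h(1) hosp_part_mono[OF T] hosp_part_mono[OF ST] _ h(2)] z(1)
      by (simp add: hosp_part_def)
    then show ?thesis using h(1) by (auto simp: chH_def)
  qed
  show "card (chH H B tb S) \<le> card (chH H B tb T)" if "T \<subseteq> X" "S \<subseteq> T" for S T
    using that card_chH chh_card_mono[OF _ hosp_part_mono[OF that(1)] hosp_part_mono[OF that(2)]]
    by (simp add: sum_mono)
qed

lemma budget_exhausted_if_rejected:
  assumes "h \<in> H" "x \<in> rejections P" "cH x = h"
  shows "B h \<le> wsum (hosp_part (gda H X B tb P) h)"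
proof -
  let ?Y = "gda H X B tb P"
  let ?T = "?Y \<union> rejections P"
  have T: "?T \<subseteq> X" using gda_subset rejected_subset by blast
  have Y: "hosp_part ?Y h = chh B tb h (hosp_part ?T h)"
    using hosp_part_chH[OF assms(1) T] Ch_gda_rejections by simp
  have "x \<in> hosp_part ?T h" "x \<notin> hosp_part ?Y h"
    using assms(2,3) gda_disjoint by (auto simp: hosp_part_def)
  then have "chh B tb h (hosp_part ?T h) \<noteq> hosp_part ?T h" using Y by blast
  then show ?thesis using chh_saturated[OF assms(1) hosp_part_mono[OF T]] Y by simp
qed

lemma wsum_gda_less:
  assumes "h \<in> H"
  shows "wsum (hosp_part (gda H X B tb P) h) < B h + wbar X h"
proof -
  note Y = hosp_part_chH[OF assms gda_subset, of P, unfolded gda_fixpoint]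
  show ?thesis by (subst Y) (rule wsum_chh_less[OF assms hosp_part_mono[OF gda_subset]])
qed

lemma gda_not_blocked:
  assumes prefs: "valid_profile D X P" and doctors: "\<And>y. y \<in> X \<Longrightarrow> cD y \<in> D"
    and h: "h \<in> H" and utility: "\<And>Y. Y \<subseteq> hosp_part X h \<Longrightarrow> f h Y = \<gamma> * wsum Y" "0 < \<gamma>"
    and budget: "B' h = max (B h) (wsum (hosp_part (gda H X B tb P) h))"
  shows "\<not> blocks X P f B' h Z (gda H X B tb P)"
proof
  let ?Y = "gda H X B tb P"
  assume "blocks X P f B' h Z ?Y"
  then have Z: "Z \<subseteq> hosp_part X h" "wsum Z \<le> B' h"
      "\<And>x. x \<in> Z - ?Y \<Longrightarrow> (Some x, outcome ?Y (cD x)) \<in> P (cD x)"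
    and gain: "f h (hosp_part ?Y h) < f h Z"
    unfolding blocks_def by blast+
  have Yh: "hosp_part ?Y h \<subseteq> hosp_part X h" using hosp_part_mono[OF gda_subset] .
  have more: "wsum (hosp_part ?Y h) < wsum Z"
    using gain utility(1)[OF Z(1)] utility(1)[OF Yh] utility(2) by simp
  then have under: "wsum (hosp_part ?Y h) < B h" using Z(2) budget by linarith
  have "\<not> Z \<subseteq> ?Y"
  proof
    assume "Z \<subseteq> ?Y"
    then have "Z \<subseteq> hosp_part ?Y h" using Z(1) by (auto simp: hosp_part_def)
    then have "wsum Z \<le> wsum (hosp_part ?Y h)"
      using finite_hosp_part[OF Yh] wage_pos_part[OF Yh] by (rule wsum_mono)
    then show False using more by simp
  qed
  then obtain x where x: "x \<in> Z" "x \<notin> ?Y" by blast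
  have "x \<in> X" "cH x = h" using x(1) Z(1) by (auto simp: hosp_part_def)
  then have "x \<in> rejections P"
    using preferred_contract_rejected[OF prefs doctors _ x(2) Z(3)] x by blast
  then show False using budget_exhausted_if_rejected[OF h _ \<open>cH x = h\<close>, of P] under by simp
qed

theorem gda_stable:
  assumes prefs: "valid_profile D X P" and doctors: "\<And>y. y \<in> X \<Longrightarrow> cD y \<in> D"
    and utility: "\<And>h Y. h \<in> H \<Longrightarrow> Y \<subseteq> hosp_part X h \<Longrightarrow> f h Y = \<gamma> h * wsum Y"
      "\<And>h. h \<in> H \<Longrightarrow> 0 < \<gamma> h"
  shows "\<exists>B'. (\<forall>h\<in>H. B h \<le> B' h \<and> B' h < B h + wbar X h) \<and> stable H X P f B' (gda H X B tb P)"
proof (intro exI conjI)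
  let ?Y = "gda H X B tb P"
  let ?B' = "\<lambda>h. max (B h) (wsum (hosp_part ?Y h))"
  show "\<forall>h\<in>H. B h \<le> ?B' h \<and> ?B' h < B h + wbar X h"
    using wsum_gda_less wbar_pos by auto
  show "stable H X P f ?B' ?Y"
    unfolding stable_def feasible_def
    using gda_subset gda_is_matching[OF prefs doctors]
      gda_not_blocked[OF prefs doctors _ utility(1) utility(2)] by auto
qed

end

theorem theorem6:
  fixes D :: "'d set" and H :: "'h set" and X :: "('d, 'h) contract set"
    and B :: "'h \<Rightarrow> real" and f :: "'h \<Rightarrow> ('d, 'h) contract set \<Rightarrow> real"
    and \<gamma> :: "'h \<Rightarrow> real" and tb :: "'h \<Rightarrow> ('d, 'h) contract rel"
  assumes "finite D" and "finite H" and "finite X"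
    and "X \<subseteq> D \<times> H \<times> {w. 0 < w}"
    and "\<forall>h\<in>H. 0 < B h"
    and "\<forall>x\<in>X. cW x \<le> B (cH x)"
    and "\<forall>h\<in>H. hosp_part X h \<noteq> {}"
    and "\<forall>h\<in>H. 0 < \<gamma> h \<and> (\<forall>Y \<subseteq> hosp_part X h. f h Y = \<gamma> h * wsum Y)"
    and "\<forall>h\<in>H. strict_linear_order_on (hosp_part X h) (tb h)"
  shows "strategy_proof D X (gda H X B tb) \<and>
    (\<forall>P. valid_profile D X P \<longrightarrow>
      (\<exists>B'. (\<forall>h\<in>H. B h \<le> B' h \<and> B' h < B h + wbar X h) \<and>
            stable H X P f B' (gda H X B tb P)))"
proof -
  have contract: "cD x \<in> D" "cH x \<in> H" "0 < cW x" if "x \<in> X" for x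
    using subsetD[OF assms(4) that] by (auto simp: cD_def cH_def cW_def)
  interpret budget_market H X B tb
    by unfold_locales (use assms contract in auto)
  show ?thesis
    using gda_strategy_proof[of D] gda_stable[of D _ f \<gamma>] contract assms(8) by auto
qed

end
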